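(* There exist a measurable space $(X,\Sigma)$ and a transition function $p$ on it (with countably additive $p(x,\cdot)$) whose associated operator $A$ on $ba(X,\Sigma)$ has a cycle of measures $K=\{\mu_1,\dots,\mu_m\}$ of period $m\ge 2$ all of whose cyclic measures are purely finitely additive.
   Context: $X$ is an infinite set and $\Sigma$ a $\sigma$-algebra of subsets of $X$ containing all one-point sets. $ba(X,\Sigma)$ denotes the space of bounded finitely additive real-valued measures on $\Sigma$. A nonnegative finitely additive measure $\mu$ is purely finitely additive if every countably additive measure $\lambda$ with $0\le\lambda\le\mu$ is identically zero. A transition function is a map $p(x,E)$ with $0\le p(x,E)\le 1$, $p(x,X)=1$, $p(\cdot,E)$ bounded $\Sigma$-measurable for every $E\in\Sigma$, and $p(x,\cdot)$ countably additive for every $x\in X$. The Markov operator is $A\mu(E)=\int_X p(x,E)\,\mu(dx)$. A cycle of measures of $A$ is a finite numbered set $\{\mu_1,\dots,\mu_m\}$ of pairwise different positive finitely additive measures with $A\mu_i=\mu_{i+1}$ ($1\le i\le m-1$) and $A\mu_m=\mu_1$; $m$ is its period. *)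

theory Defs
  imports "HOL-Analysis.Analysis"
begin

definition standing_space :: "'a set \<Rightarrow> 'a set set \<Rightarrow> bool" where
  "standing_space X \<Sigma> \<longleftrightarrow> infinite X \<and> sigma_algebra X \<Sigma> \<and> (\<forall>x\<in>X. {x} \<in> \<Sigma>)"

definition fin_additive :: "'a set set \<Rightarrow> ('a set \<Rightarrow> real) \<Rightarrow> bool" where
  "fin_additive \<Sigma> \<mu> \<longleftrightarrow> \<mu> {} = 0 \<and>
     (\<forall>A\<in>\<Sigma>. \<forall>B\<in>\<Sigma>. A \<inter> B = {} \<longrightarrow> \<mu> (A \<union> B) = \<mu> A + \<mu> B)"

definition ba_measure :: "'a set set \<Rightarrow> ('a set \<Rightarrow> real) \<Rightarrow> bool" where
  "ba_measure \<Sigma> \<mu> \<longleftrightarrow> fin_additive \<Sigma> \<mu> \<and> (\<exists>B. \<forall>E\<in>\<Sigma>. \<bar>\<mu> E\<bar> \<le> B)"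

definition positive_ba :: "'a set set \<Rightarrow> ('a set \<Rightarrow> real) \<Rightarrow> bool" where
  "positive_ba \<Sigma> \<mu> \<longleftrightarrow> ba_measure \<Sigma> \<mu> \<and> (\<forall>E\<in>\<Sigma>. 0 \<le> \<mu> E)"

definition count_additive :: "'a set set \<Rightarrow> ('a set \<Rightarrow> real) \<Rightarrow> bool" where
  "count_additive \<Sigma> nu \<longleftrightarrow> fin_additive \<Sigma> nu \<and>
     (\<forall>F::nat \<Rightarrow> 'a set. range F \<subseteq> \<Sigma> \<longrightarrow> disjoint_family F \<longrightarrow>
        (\<lambda>n. nu (F n)) sums nu (\<Union>n. F n))"

definition purely_fin_additive :: "'a set set \<Rightarrow> ('a set \<Rightarrow> real) \<Rightarrow> bool" where
  "purely_fin_additive \<Sigma> \<mu> \<longleftrightarrow> positive_ba \<Sigma> \<mu> \<and>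
     (\<forall>nu. count_additive \<Sigma> nu \<and> (\<forall>E\<in>\<Sigma>. 0 \<le> nu E \<and> nu E \<le> \<mu> E)
            \<longrightarrow> (\<forall>E\<in>\<Sigma>. nu E = 0))"

definition transition_function :: "'a set \<Rightarrow> 'a set set \<Rightarrow> ('a \<Rightarrow> 'a set \<Rightarrow> real) \<Rightarrow> bool" where
  "transition_function X \<Sigma> p \<longleftrightarrow>
     (\<forall>x\<in>X. \<forall>E\<in>\<Sigma>. 0 \<le> p x E \<and> p x E \<le> 1) \<and>
     (\<forall>x\<in>X. p x X = 1) \<and>
     (\<forall>E\<in>\<Sigma>. \<forall>a::real. {x\<in>X. p x E \<le> a} \<in> \<Sigma>) \<and>
     (\<forall>x\<in>X. count_additive \<Sigma> (p x))"

text \<open>Integral of a bounded nonnegative measurable function with respect to a nonnegative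
  bounded finitely additive measure: supremum of lower sums over finite measurable partitions
  of X (this agrees with the usual integral on ba for such integrands).\<close>
definition fa_partitions :: "'a set \<Rightarrow> 'a set set \<Rightarrow> 'a set set set" where
  "fa_partitions X \<Sigma> = {P. finite P \<and> P \<subseteq> \<Sigma> - {{}} \<and> disjoint P \<and> \<Union>P = X}"

definition fa_integral :: "'a set \<Rightarrow> 'a set set \<Rightarrow> ('a set \<Rightarrow> real) \<Rightarrow> ('a \<Rightarrow> real) \<Rightarrow> real" where
  "fa_integral X \<Sigma> \<mu> f = (SUP P\<in>fa_partitions X \<Sigma>. \<Sum>E\<in>P. (INF x\<in>E. f x) * \<mu> E)"

definition markov_op :: "'a set \<Rightarrow> 'a set set \<Rightarrow> ('a \<Rightarrow> 'a set \<Rightarrow> real) \<Rightarrow> ('a set \<Rightarrow> real) \<Rightarrow> ('a set \<Rightarrow> real)" where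
  "markov_op X \<Sigma> p \<mu> = (\<lambda>E. fa_integral X \<Sigma> \<mu> (\<lambda>x. p x E))"

definition measure_cycle :: "'a set \<Rightarrow> 'a set set \<Rightarrow> ('a \<Rightarrow> 'a set \<Rightarrow> real) \<Rightarrow> nat \<Rightarrow> (nat \<Rightarrow> 'a set \<Rightarrow> real) \<Rightarrow> bool" where
  "measure_cycle X \<Sigma> p m \<mu> \<longleftrightarrow> m \<ge> 1 \<and>
     (\<forall>i\<in>{1..m}. positive_ba \<Sigma> (\<mu> i)) \<and>
     (\<forall>i\<in>{1..m}. \<forall>j\<in>{1..m}. i \<noteq> j \<longrightarrow> (\<exists>E\<in>\<Sigma>. \<mu> i E \<noteq> \<mu> j E)) \<and>
     (\<forall>i\<in>{1..<m}. \<forall>E\<in>\<Sigma>. markov_op X \<Sigma> p (\<mu> i) E = \<mu> (Suc i) E) \<and>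
     (\<forall>E\<in>\<Sigma>. markov_op X \<Sigma> p (\<mu> m) E = \<mu> 1 E)"

end

theory Submission
  imports Defs
begin

text \<open>Take \<open>X = \<nat>\<close> with all subsets measurable. A free ultrafilter \<open>U\<close> yields the two-valued
  measure \<open>\<delta>\<^sub>U\<close> (1 on the sets of \<open>U\<close>, 0 elsewhere). It vanishes on points, and on a countable
  set a countably additive measure vanishing on points is zero, so \<open>\<delta>\<^sub>U\<close> is purely finitely
  additive. For the deterministic kernel \<open>p(x,\<cdot>) = \<delta>\<^bsub>\<sigma> x\<^esub>\<close> of a map \<open>\<sigma>\<close> one gets
  \<open>A \<delta>\<^sub>U = \<delta>\<^bsub>\<sigma>(U)\<^esub>\<close>, since every lower sum of the integral is decided by the unique cell of
  the partition that lies in \<open>U\<close>. If \<open>\<sigma>\<close> swaps \<open>2k\<close> and \<open>2k+1\<close> and \<open>U\<close> contains the even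
  numbers, then \<open>\<sigma>(U)\<close> contains the odd ones, and \<open>\<delta>\<^sub>U, \<delta>\<^bsub>\<sigma>(U)\<^esub>\<close> is a cycle of period 2.\<close>

definition ultrafilter :: "'a filter \<Rightarrow> bool" where
  "ultrafilter F \<longleftrightarrow> F \<noteq> bot \<and> (\<forall>P. eventually P F \<or> eventually (\<lambda>x. \<not> P x) F)"

definition free_filter :: "'a filter \<Rightarrow> bool" where
  "free_filter F \<longleftrightarrow> (\<forall>x. eventually (\<lambda>y. y \<noteq> x) F)"

lemma proper_filter_eventually_disjoint:
  assumes "F \<noteq> bot" "eventually (\<lambda>x. x \<in> A) F" "eventually (\<lambda>x. x \<in> B) F"
  shows "A \<inter> B \<noteq> {}"
  using eventually_happens'[OF assms(1) eventually_conj[OF assms(2,3)]] by blast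

lemma ultrafilter_eventually_iff_frequently:
  assumes "ultrafilter F"
  shows "eventually P F \<longleftrightarrow> frequently P F"
  using assms eventually_frequently[of F P] unfolding ultrafilter_def frequently_def by blast

lemma ultrafilter_filtermap: "ultrafilter F \<Longrightarrow> ultrafilter (filtermap f F)"
  by (simp add: ultrafilter_def eventually_filtermap filtermap_bot_iff)

lemma free_filter_filtermap:
  assumes "inj f" "free_filter F"
  shows "free_filter (filtermap f F)"
  unfolding free_filter_def eventually_filtermap
proof
  fix x
  show "eventually (\<lambda>y. f y \<noteq> x) F"
  proof (cases "x \<in> range f")
    case True
    then obtain z where "x = f z" by blast
    moreover have "eventually (\<lambda>y. y \<noteq> z) F"
      using assms(2) unfolding free_filter_def by blast
    ultimately show ?thesis
      using assms(1) by (auto simp: inj_eq elim: eventually_mono)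
  next
    case False
    then show ?thesis
      by (auto intro: always_eventually)
  qed
qed

lemma minimal_proper_filter_is_ultrafilter:
  assumes "F \<noteq> bot" and minimal: "\<And>F'. F' \<noteq> bot \<Longrightarrow> F' \<le> F \<Longrightarrow> F' = F"
  shows "ultrafilter F"
  unfolding ultrafilter_def
proof (intro conjI allI)
  fix P
  show "eventually P F \<or> eventually (\<lambda>x. \<not> P x) F"
  proof (rule disjCI)
    assume "\<not> eventually (\<lambda>x. \<not> P x) F"
    then have "inf F (principal {x. P x}) \<noteq> bot"
      by (simp add: eventually_inf_principal trivial_limit_def)
    then have "inf F (principal {x. P x}) = F"
      by (intro minimal) simp_all
    moreover have "eventually P (inf F (principal {x. P x}))"
      by (simp add: eventually_inf_principal)
    ultimately show "eventually P F"
      by simp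
  qed
qed fact

lemma ex_ultrafilter_le:
  assumes "G \<noteq> bot"
  shows "\<exists>F. ultrafilter F \<and> F \<le> G"
proof -
  define A where "A = {F. F \<noteq> bot \<and> F \<le> G}"
  have po: "partial_order_on A (relation_of (\<lambda>F F'. F' \<le> F) A)"
    by (rule partial_order_on_relation_ofI) auto
  have "\<exists>L\<in>A. \<forall>F\<in>C. L \<le> F" if C: "C \<in> Chains (relation_of (\<lambda>F F'. F' \<le> F) A)" for C
  proof (cases "C = {}")
    case True
    then show ?thesis using assms unfolding A_def by blast
  next
    case False
    have CA: "C \<subseteq> A"
      using C by (rule Chains_relation_of)
    have directed: "\<exists>H\<in>C. H \<le> inf F1 F2" if "F1 \<in> C" "F2 \<in> C" for F1 F2
    proof -
      have "F2 \<le> F1 \<or> F1 \<le> F2"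
        using C that unfolding Chains_def relation_of_def by blast
      then show ?thesis
        using that by (metis inf.absorb_iff1 inf.absorb_iff2 order_refl)
    qed
    have "\<not> eventually (\<lambda>_. False) (INF F\<in>C. F)"
      using eventually_INF_base[of C "\<lambda>F. F", OF False directed] CA
      unfolding A_def by (auto simp: trivial_limit_def)
    moreover obtain F0 where "F0 \<in> C"
      using False by blast
    then have "Inf C \<le> G"
      using CA unfolding A_def by (blast intro: order_trans[OF Inf_lower])
    ultimately have "Inf C \<in> A"
      unfolding A_def by (simp add: trivial_limit_def)
    then show ?thesis
      by (blast intro: Inf_lower)
  qed
  then obtain F where "F \<in> A" and minimal: "\<And>F'. F' \<in> A \<Longrightarrow> F' \<le> F \<Longrightarrow> F' = F"
    using predicate_Zorn[OF po] by blast
  then have "ultrafilter F"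
    by (intro minimal_proper_filter_is_ultrafilter) (auto simp: A_def)
  with \<open>F \<in> A\<close> show ?thesis
    unfolding A_def by blast
qed

lemma ex_free_ultrafilter:
  assumes "infinite S"
  shows "\<exists>F. ultrafilter F \<and> free_filter F \<and> eventually (\<lambda>x. x \<in> S) F"
proof -
  have "inf cofinite (principal S) \<noteq> bot"
    using assms by (simp add: trivial_limit_def eventually_inf_principal eventually_cofinite)
  then obtain F where F: "ultrafilter F" "F \<le> inf cofinite (principal S)"
    using ex_ultrafilter_le by blast
  have "eventually (\<lambda>y. y \<noteq> x) (inf cofinite (principal S))" for x
    by (simp add: eventually_inf_principal eventually_cofinite)
  then have "free_filter F"
    unfolding free_filter_def using F(2) by (blast intro: filter_leD)
  moreover have "eventually (\<lambda>x. x \<in> S) (inf cofinite (principal S))"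
    by (simp add: eventually_inf_principal)
  then have "eventually (\<lambda>x. x \<in> S) F"
    using F(2) by (rule filter_leD[rotated])
  ultimately show ?thesis
    using F(1) by blast
qed

definition ultrafilter_measure :: "'a filter \<Rightarrow> 'a set \<Rightarrow> real" where
  "ultrafilter_measure F E = (if eventually (\<lambda>x. x \<in> E) F then 1 else 0)"

lemma ultrafilter_measure_Un:
  assumes "ultrafilter F" "A \<inter> B = {}"
  shows "ultrafilter_measure F (A \<union> B) = ultrafilter_measure F A + ultrafilter_measure F B"
proof -
  have "F \<noteq> bot"
    using assms(1) unfolding ultrafilter_def by blast
  then have "\<not> (eventually (\<lambda>x. x \<in> A) F \<and> eventually (\<lambda>x. x \<in> B) F)"
    using proper_filter_eventually_disjoint assms(2) by blast
  moreover have "eventually (\<lambda>x. x \<in> A \<union> B) F \<longleftrightarrow>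
      eventually (\<lambda>x. x \<in> A) F \<or> eventually (\<lambda>x. x \<in> B) F"
    using ultrafilter_eventually_iff_frequently[OF assms(1)] by (simp add: frequently_disj_iff)
  ultimately show ?thesis
    unfolding ultrafilter_measure_def by auto
qed

lemma positive_ba_ultrafilter_measure:
  assumes "ultrafilter F"
  shows "positive_ba UNIV (ultrafilter_measure F)"
  unfolding positive_ba_def ba_measure_def fin_additive_def
proof (intro conjI ballI impI exI)
  show "ultrafilter_measure F {} = 0"
    using assms unfolding ultrafilter_def ultrafilter_measure_def by (simp add: trivial_limit_def)
  show "ultrafilter_measure F (A \<union> B) = ultrafilter_measure F A + ultrafilter_measure F B"
    if "A \<inter> B = {}" for A B
    using assms that by (rule ultrafilter_measure_Un)
  show "\<bar>ultrafilter_measure F E\<bar> \<le> 1" "0 \<le> ultrafilter_measure F E" for E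
    by (simp_all add: ultrafilter_measure_def)
qed

lemma count_additive_vanishing_on_singletons:
  fixes \<nu> :: "'a::countable set \<Rightarrow> real"
  assumes "count_additive UNIV \<nu>" and singleton: "\<And>x. \<nu> {x} = 0"
  shows "\<nu> E = 0"
proof -
  define D :: "nat \<Rightarrow> 'a set" where "D n = (if n \<in> to_nat ` E then {from_nat n} else {})" for n
  have "disjoint_family D"
    unfolding disjoint_family_on_def D_def by auto
  moreover have "(\<Union>n. D n) = E"
    unfolding D_def by (auto split: if_splits)
  ultimately have "(\<lambda>n. \<nu> (D n)) sums \<nu> E"
    using assms(1) unfolding count_additive_def by (metis top_greatest)
  moreover have "\<nu> {} = 0"
    using assms(1) unfolding count_additive_def fin_additive_def by simp
  then have "(\<lambda>n. \<nu> (D n)) = (\<lambda>n. 0)"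
    by (simp add: D_def singleton fun_eq_iff)
  ultimately show ?thesis
    using sums_unique2 sums_zero by metis
qed

lemma purely_fin_additive_ultrafilter_measure:
  fixes F :: "'a::countable filter"
  assumes "ultrafilter F" "free_filter F"
  shows "purely_fin_additive UNIV (ultrafilter_measure F)"
  unfolding purely_fin_additive_def
proof (intro conjI allI impI ballI)
  show "positive_ba UNIV (ultrafilter_measure F)"
    using assms(1) by (rule positive_ba_ultrafilter_measure)
  fix \<nu> E
  assume "count_additive UNIV \<nu> \<and> (\<forall>E\<in>UNIV. 0 \<le> \<nu> E \<and> \<nu> E \<le> ultrafilter_measure F E)"
  then have ca: "count_additive UNIV \<nu>"
    and bounds: "\<And>E. 0 \<le> \<nu> E" "\<And>E. \<nu> E \<le> ultrafilter_measure F E"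
    by simp_all
  have "\<not> eventually (\<lambda>y. y \<in> {x}) F" for x
  proof
    assume "eventually (\<lambda>y. y \<in> {x}) F"
    moreover have "eventually (\<lambda>y. y \<in> - {x}) F"
      using assms(2) unfolding free_filter_def by simp
    ultimately show False
      using proper_filter_eventually_disjoint[of F "{x}" "- {x}"] assms(1)
      unfolding ultrafilter_def by blast
  qed
  then have "\<nu> {x} = 0" for x
    using bounds[of "{x}"] unfolding ultrafilter_measure_def by simp
  with ca show "\<nu> E = 0"
    by (rule count_additive_vanishing_on_singletons)
qed

lemma ultrafilter_partition_cell:
  assumes "ultrafilter F" "P \<in> fa_partitions UNIV UNIV"
  obtains E0 where "E0 \<in> P" "eventually (\<lambda>x. x \<in> E0) F"
    "\<And>E. E \<in> P \<Longrightarrow> ultrafilter_measure F E = (if E = E0 then 1 else 0)"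
proof -
  have fin: "finite P" and dj: "disjoint P" and cover: "\<Union>P = UNIV"
    using assms(2) unfolding fa_partitions_def by auto
  have "eventually (\<lambda>x. \<exists>E\<in>P. x \<in> E) F"
    using cover by (intro always_eventually) blast
  then have "frequently (\<lambda>x. \<exists>E\<in>P. x \<in> E) F"
    by (simp only: ultrafilter_eventually_iff_frequently[OF assms(1)])
  then obtain E0 where E0: "E0 \<in> P" "frequently (\<lambda>x. x \<in> E0) F"
    using frequently_bex_finite[OF fin] by blast
  then have ev: "eventually (\<lambda>x. x \<in> E0) F"
    by (simp only: ultrafilter_eventually_iff_frequently[OF assms(1)])
  have cell_measure: "ultrafilter_measure F E = (if E = E0 then 1 else 0)" if "E \<in> P" for E
  proof (cases "E = E0")
    case False
    then have "E \<inter> E0 = {}"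
      using dj that E0(1) by (simp add: disjointD)
    then have "\<not> eventually (\<lambda>x. x \<in> E) F"
      using proper_filter_eventually_disjoint ev assms(1) unfolding ultrafilter_def by blast
    with False show ?thesis
      unfolding ultrafilter_measure_def by simp
  qed (simp add: ultrafilter_measure_def ev)
  show ?thesis
    using E0(1) ev cell_measure by (rule that)
qed

lemma INF_indicator:
  assumes "E \<noteq> {}"
  shows "(INF x\<in>E. indicator S x :: real) = (if E \<subseteq> S then 1 else 0)"
proof (cases "E \<subseteq> S")
  case True
  then have "(INF x\<in>E. indicator S x :: real) = (INF x\<in>E. 1)"
    by (intro INF_cong) (auto simp: indicator_def)
  with True assms show ?thesis
    by simp
next
  case False
  then have "0 \<in> (\<lambda>x. indicator S x :: real) ` E"
    by (auto simp: indicator_def image_iff)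
  then have "(INF x\<in>E. indicator S x :: real) = 0"
    by (rule cInf_eq_minimum) auto
  with False show ?thesis
    by simp
qed

lemma fa_integral_indicator_ultrafilter_measure:
  assumes "ultrafilter F"
  shows "fa_integral UNIV UNIV (ultrafilter_measure F) (indicator S) = ultrafilter_measure F S"
proof -
  define lower_sum where
    "lower_sum P = (\<Sum>E\<in>P. (INF x\<in>E. indicator S x) * ultrafilter_measure F E)" for P
  have cell: "\<exists>E0\<in>P. eventually (\<lambda>x. x \<in> E0) F \<and> lower_sum P = (if E0 \<subseteq> S then 1 else 0)"
    if P: "P \<in> fa_partitions UNIV UNIV" for P
  proof -
    obtain E0 where E0: "E0 \<in> P" "eventually (\<lambda>x. x \<in> E0) F"
      and cell_measure: "\<And>E. E \<in> P \<Longrightarrow> ultrafilter_measure F E = (if E = E0 then 1 else 0)"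
      using ultrafilter_partition_cell[OF assms P] by blast
    have "finite P" "E0 \<noteq> {}"
      using P E0(1) unfolding fa_partitions_def by auto
    have "lower_sum P = (\<Sum>E\<in>P. if E = E0 then (INF x\<in>E. indicator S x) else 0)"
      unfolding lower_sum_def by (intro sum.cong) (simp_all add: cell_measure)
    also have "\<dots> = (INF x\<in>E0. indicator S x)"
      using \<open>finite P\<close> E0(1) by (simp add: sum.delta')
    finally show ?thesis
      using E0 \<open>E0 \<noteq> {}\<close> by (auto simp: INF_indicator)
  qed
  have "lower_sum P \<le> ultrafilter_measure F S" if P: "P \<in> fa_partitions UNIV UNIV" for P
  proof -
    obtain E0 where "eventually (\<lambda>x. x \<in> E0) F" "lower_sum P = (if E0 \<subseteq> S then 1 else 0)"
      using cell[OF P] by blast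
    moreover have "eventually (\<lambda>x. x \<in> S) F" if "E0 \<subseteq> S" "eventually (\<lambda>x. x \<in> E0) F"
      using that by (auto elim: eventually_mono)
    ultimately show ?thesis
      unfolding ultrafilter_measure_def by auto
  qed
  moreover have "ultrafilter_measure F S \<in> lower_sum ` fa_partitions UNIV UNIV"
  proof
    define P where "P = {S, - S} - {{}}"
    show "P \<in> fa_partitions UNIV UNIV"
      unfolding P_def fa_partitions_def by (auto simp: disjoint_def)
    then obtain E0 where E0: "E0 \<in> P" "eventually (\<lambda>x. x \<in> E0) F"
      and "lower_sum P = (if E0 \<subseteq> S then 1 else 0)"
      using cell by blast
    moreover have "E0 \<subseteq> S \<longleftrightarrow> eventually (\<lambda>x. x \<in> S) F"
      using E0 proper_filter_eventually_disjoint[of F S "- S"] assms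
      unfolding P_def ultrafilter_def by (auto elim: eventually_mono)
    ultimately show "ultrafilter_measure F S = lower_sum P"
      unfolding ultrafilter_measure_def by simp
  qed
  ultimately show ?thesis
    unfolding fa_integral_def lower_sum_def[symmetric] by (intro cSup_eq_maximum) auto
qed

definition deterministic_kernel :: "('a \<Rightarrow> 'a) \<Rightarrow> 'a \<Rightarrow> 'a set \<Rightarrow> real" where
  "deterministic_kernel f x E = indicator E (f x)"

lemma count_additive_indicator_point: "count_additive UNIV (\<lambda>E. indicator E y :: real)"
  unfolding count_additive_def fin_additive_def
proof (intro conjI ballI impI allI)
  show "indicator (A \<union> B) y = indicator A y + (indicator B y :: real)" if "A \<inter> B = {}" for A B
    using that by (auto simp: indicator_def)
  show "(\<lambda>n. indicator (D n) y) sums (indicator (\<Union>n. D n) y :: real)" if "disjoint_family D" for D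
    using that by (intro indicator_sums) (simp add: disjoint_family_on_def)
qed simp

lemma transition_function_deterministic_kernel:
  "transition_function UNIV UNIV (deterministic_kernel f)"
  unfolding transition_function_def deterministic_kernel_def
  using count_additive_indicator_point by auto

lemma markov_op_deterministic_kernel_ultrafilter_measure:
  assumes "ultrafilter F"
  shows "markov_op UNIV UNIV (deterministic_kernel f) (ultrafilter_measure F) E =
    ultrafilter_measure (filtermap f F) E"
  unfolding markov_op_def deterministic_kernel_def indicator_vimage[symmetric]
  using fa_integral_indicator_ultrafilter_measure[OF assms]
  by (simp add: ultrafilter_measure_def eventually_filtermap)

lemma measure_cycle_period_2I:
  assumes "positive_ba \<Sigma> \<mu>\<^sub>1" "positive_ba \<Sigma> \<mu>\<^sub>2" "E \<in> \<Sigma>" "\<mu>\<^sub>1 E \<noteq> \<mu>\<^sub>2 E"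
    and "\<And>E. E \<in> \<Sigma> \<Longrightarrow> markov_op X \<Sigma> p \<mu>\<^sub>1 E = \<mu>\<^sub>2 E"
    and "\<And>E. E \<in> \<Sigma> \<Longrightarrow> markov_op X \<Sigma> p \<mu>\<^sub>2 E = \<mu>\<^sub>1 E"
  shows "measure_cycle X \<Sigma> p 2 (\<lambda>i. if i = 1 then \<mu>\<^sub>1 else \<mu>\<^sub>2)"
proof -
  have "{1..2::nat} = {1, 2}" "{1..<2::nat} = {1}"
    by auto
  with assms show ?thesis
    unfolding measure_cycle_def by (auto simp: eq_commute[of "\<mu>\<^sub>2 _"])
qed

definition swap_parity :: "nat \<Rightarrow> nat" where
  "swap_parity n = (if even n then Suc n else n - 1)"

lemma swap_parity_swap_parity [simp]: "swap_parity (swap_parity n) = n"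
  unfolding swap_parity_def by auto

lemma even_swap_parity [simp]: "even (swap_parity n) \<longleftrightarrow> odd n"
  unfolding swap_parity_def by auto

lemma infinite_evens: "infinite {n::nat. even n}"
  unfolding infinite_nat_iff_unbounded_le
proof
  show "\<exists>n\<ge>m. n \<in> {n. even n}" for m :: nat
    by (intro exI[of _ "2 * m"]) simp
qed

theorem proposition4p1:
  shows "\<exists>(X::nat set) \<Sigma> p m \<mu>. standing_space X \<Sigma> \<and> transition_function X \<Sigma> p \<and>
           measure_cycle X \<Sigma> p m \<mu> \<and> m \<ge> 2 \<and>
           (\<forall>i\<in>{1..m}. purely_fin_additive \<Sigma> (\<mu> i))"
proof -
  obtain M :: "nat filter" where M: "ultrafilter M" "free_filter M" and "eventually even M"
    using ex_free_ultrafilter[OF infinite_evens] by auto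
  define M' where "M' = filtermap swap_parity M"
  have "inj swap_parity"
    by (metis inj_on_inverseI swap_parity_swap_parity)
  then have M': "ultrafilter M'" "free_filter M'"
    unfolding M'_def using M by (auto intro: ultrafilter_filtermap free_filter_filtermap)
  have "filtermap swap_parity M' = M"
    by (simp add: M'_def filtermap_filtermap filtermap_ident)
  then have markov: "markov_op UNIV UNIV (deterministic_kernel swap_parity) (ultrafilter_measure M) E =
      ultrafilter_measure M' E"
    "markov_op UNIV UNIV (deterministic_kernel swap_parity) (ultrafilter_measure M') E =
      ultrafilter_measure M E" for E
    using M(1) M'(1) by (simp_all add: markov_op_deterministic_kernel_ultrafilter_measure M'_def)
  have "\<not> eventually odd M"
    using proper_filter_eventually_disjoint[of M "{n. even n}" "{n. odd n}"] \<open>eventually even M\<close> M(1)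
    unfolding ultrafilter_def by auto
  then have "ultrafilter_measure M {n. even n} \<noteq> ultrafilter_measure M' {n. even n}"
    using \<open>eventually even M\<close> by (simp add: ultrafilter_measure_def M'_def eventually_filtermap)
  then have "measure_cycle UNIV UNIV (deterministic_kernel swap_parity) 2
      (\<lambda>i. if i = 1 then ultrafilter_measure M else ultrafilter_measure M')"
    using positive_ba_ultrafilter_measure M(1) M'(1) markov by (intro measure_cycle_period_2I) auto
  moreover have "standing_space UNIV (UNIV :: nat set set)"
    unfolding standing_space_def using sigma_algebra_Pow[of "UNIV :: nat set"] by simp
  moreover have "\<forall>i\<in>{1..2::nat}. purely_fin_additive UNIV
      ((\<lambda>i. if i = 1 then ultrafilter_measure M else ultrafilter_measure M') i)"
    using purely_fin_additive_ultrafilter_measure[OF M] purely_fin_additive_ultrafilter_measure[OF M']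
    by simp
  ultimately show ?thesis
    using transition_function_deterministic_kernel by blast
qed

end
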